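(* Let $f_0\colon X\hookrightarrow Y_0$ and $f_1\colon X\hookrightarrow Y_1$ be embeddings in $\mathbf{MetCH_{sep}}$ and let $\lambda_0\colon Y_0\to P$, $\lambda_1\colon Y_1\to P$ (with $\lambda_0\circ f_0=\lambda_1\circ f_1$) be their pushout in $\mathbf{MetCH_{sep}}$. Then for all $i,j\in\{0,1\}$, $u\in Y_i$, $v\in Y_j$: $$d_P(\lambda_i(u),\lambda_j(v))=\begin{cases} d_{Y_i}(u,v) & \text{if } i=j,\\ \inf_{x\in X}\big(d_{Y_i}(u,f_i(x))+d_{Y_j}(f_j(x),v)\big) & \text{if } i\neq j.\end{cases}$$
   Context: A metric on a set $X$ is a map $d\colon X\times X\to[0,\infty]$ with $d(x,x)=0$ and $d(x,z)\le d(x,y)+d(y,z)$ (not necessarily symmetric, $\infty$ allowed); separated means $d(x,y)=0=d(y,x)$ implies $x=y$. A separated metric compact Hausdorff space is a compact Hausdorff space with a separated metric $d\colon X\times X\to[0,\infty]$ continuous with respect to the upper topology on $[0,\infty]$ (open sets $]u,\infty]$, plus $\emptyset$ and $[0,\infty]$). $\mathbf{MetCH_{sep}}$: these spaces with continuous non-expansive maps as morphisms. An embedding is an injective morphism $f$ with $d_X(x,y)=d_Y(f(x),f(y))$ for all $x,y$. *)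

theory Defs
  imports "HOL-Analysis.Analysis" "HOL-Library.Extended_Nonnegative_Real"
begin

text \<open>A (generalised, possibly asymmetric, possibly infinite) metric space structure on the
  carrier of a topology: the space is the pair (T, d) with carrier topspace T and
  d valued in [0,\<infinity>] (ennreal).  Continuity of d w.r.t. the upper topology on [0,\<infinity>]
  means the preimage of every ]u,\<infinity>] is open in the product topology.\<close>

definition metCH_sep :: "'a topology \<Rightarrow> ('a \<Rightarrow> 'a \<Rightarrow> ennreal) \<Rightarrow> bool" where
  "metCH_sep T d \<longleftrightarrow>
     compact_space T \<and> Hausdorff_space T \<and>
     (\<forall>x\<in>topspace T. d x x = 0) \<and>
     (\<forall>x\<in>topspace T. \<forall>y\<in>topspace T. \<forall>z\<in>topspace T. d x z \<le> d x y + d y z) \<and>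
     (\<forall>x\<in>topspace T. \<forall>y\<in>topspace T. d x y = 0 \<and> d y x = 0 \<longrightarrow> x = y) \<and>
     (\<forall>u::ennreal. openin (prod_topology T T)
         {p \<in> topspace T \<times> topspace T. u < d (fst p) (snd p)})"

definition metCH_mor :: "'a topology \<Rightarrow> ('a \<Rightarrow> 'a \<Rightarrow> ennreal) \<Rightarrow>
    'b topology \<Rightarrow> ('b \<Rightarrow> 'b \<Rightarrow> ennreal) \<Rightarrow> ('a \<Rightarrow> 'b) \<Rightarrow> bool" where
  "metCH_mor T d T' d' f \<longleftrightarrow>
     continuous_map T T' f \<and>
     (\<forall>x\<in>topspace T. \<forall>y\<in>topspace T. d' (f x) (f y) \<le> d x y)"

definition metCH_emb :: "'a topology \<Rightarrow> ('a \<Rightarrow> 'a \<Rightarrow> ennreal) \<Rightarrow>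
    'b topology \<Rightarrow> ('b \<Rightarrow> 'b \<Rightarrow> ennreal) \<Rightarrow> ('a \<Rightarrow> 'b) \<Rightarrow> bool" where
  "metCH_emb T d T' d' f \<longleftrightarrow>
     metCH_mor T d T' d' f \<and> inj_on f (topspace T) \<and>
     (\<forall>x\<in>topspace T. \<forall>y\<in>topspace T. d' (f x) (f y) = d x y)"

text \<open>The universal property is stated for all test
  objects whose carrier lives in the type 'z (given as a TYPE argument); maps are
  identified when they agree on the carrier.\<close>
definition metCH_pushout ::
  "'z itself \<Rightarrow>
   'x topology \<Rightarrow> ('x \<Rightarrow> 'x \<Rightarrow> ennreal) \<Rightarrow>
   'a topology \<Rightarrow> ('a \<Rightarrow> 'a \<Rightarrow> ennreal) \<Rightarrow>
   'b topology \<Rightarrow> ('b \<Rightarrow> 'b \<Rightarrow> ennreal) \<Rightarrow>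
   ('x \<Rightarrow> 'a) \<Rightarrow> ('x \<Rightarrow> 'b) \<Rightarrow>
   'p topology \<Rightarrow> ('p \<Rightarrow> 'p \<Rightarrow> ennreal) \<Rightarrow>
   ('a \<Rightarrow> 'p) \<Rightarrow> ('b \<Rightarrow> 'p) \<Rightarrow> bool" where
  "metCH_pushout _ X dX Y0 d0 Y1 d1 f0 f1 P dP l0 l1 \<longleftrightarrow>
     metCH_sep P dP \<and> metCH_mor Y0 d0 P dP l0 \<and> metCH_mor Y1 d1 P dP l1 \<and>
     (\<forall>x\<in>topspace X. l0 (f0 x) = l1 (f1 x)) \<and>
     (\<forall>(Z::'z topology) dZ g0 g1.
        metCH_sep Z dZ \<and> metCH_mor Y0 d0 Z dZ g0 \<and> metCH_mor Y1 d1 Z dZ g1 \<and>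
        (\<forall>x\<in>topspace X. g0 (f0 x) = g1 (f1 x)) \<longrightarrow>
          (\<exists>h. metCH_mor P dP Z dZ h \<and>
               (\<forall>y\<in>topspace Y0. h (l0 y) = g0 y) \<and>
               (\<forall>y\<in>topspace Y1. h (l1 y) = g1 y)) \<and>
          (\<forall>h h'. metCH_mor P dP Z dZ h \<and>
               (\<forall>y\<in>topspace Y0. h (l0 y) = g0 y) \<and>
               (\<forall>y\<in>topspace Y1. h (l1 y) = g1 y) \<and>
               metCH_mor P dP Z dZ h' \<and>
               (\<forall>y\<in>topspace Y0. h' (l0 y) = g0 y) \<and>
               (\<forall>y\<in>topspace Y1. h' (l1 y) = g1 y) \<longrightarrow>
               (\<forall>p\<in>topspace P. h p = h' p)))"

end

theory Submission
  imports Defs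
begin

text \<open>
  The pushout is computed by exhibiting it: glue \<open>Y\<^sub>0\<close> and \<open>Y\<^sub>1\<close> along \<open>f\<^sub>0 x \<sim> f\<^sub>1 x\<close>
  and measure a crossing pair by the cheapest detour through \<open>X\<close>,
  \<open>d(u, v) = inf\<^sub>x d\<^sub>0(u, f\<^sub>0 x) + d\<^sub>1(f\<^sub>1 x, v)\<close>.
  Compactness of \<open>X\<close> makes this infimum attained and lower semicontinuous (the projection
  along a compact factor is a closed map), which gives separation and continuity of the
  metric; the gluing maps are closed, which makes the glued space compact Hausdorff.
  The universal property then yields a non-expansive map from \<open>P\<close> to this space, bounding
  \<open>d\<^sub>P\<close> from below, while non-expansiveness of \<open>\<lambda>\<^sub>0\<close>, \<open>\<lambda>\<^sub>1\<close> and the triangle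
  inequality in \<open>P\<close> bound it from above.
\<close>

section \<open>Lower semicontinuous functions into [0,\<infinity>]\<close>

lemma ennreal_add_INF: "k + (INF x\<in>A. f x) = (INF x\<in>A. k + f x :: ennreal)"
proof (cases "A = {}")
  case False
  have "(\<lambda>y. k + y) (Inf (f ` A)) = Inf ((\<lambda>y. k + y) ` f ` A)"
    by (rule continuous_at_Inf_mono) (auto simp: mono_def add_left_mono False intro: continuous_intros)
  then show ?thesis by (simp add: image_comp)
qed simp

lemma ennreal_INF_add: "(INF x\<in>A. f x) + k = (INF x\<in>A. f x + k :: ennreal)"
  using ennreal_add_INF[of k f A] by (simp add: add.commute)

text \<open>The first two disjuncts cover \<open>a = 0\<close> and \<open>b = 0\<close>, where no \<open>r < a\<close> resp. \<open>s < b\<close> exists.\<close>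

lemma ennreal_less_add_cases:
  fixes t a b :: ennreal
  assumes "t < a + b"
  shows "t < a \<or> t < b \<or> (\<exists>r<a. \<exists>s<b. t < r + s)"
proof (rule ccontr)
  assume contra: "\<not> ?thesis"
  then have le: "a \<le> t" "b \<le> t" by auto
  moreover have "t < top" using assms top.not_eq_extremum by fastforce
  ultimately have fin: "a < top" "b < top" by auto
  have "t - a < b" using assms fin le by (simp add: minus_less_iff_ennreal add.commute)
  then obtain s where s: "t - a < s" "s < b" using dense by blast
  then have "t - s < a" using fin le by (simp add: minus_less_iff_ennreal add.commute)
  then obtain r where "t - s < r" "r < a" using dense by blast
  then have "t < r + s" using s fin le by (simp add: minus_less_iff_ennreal)
  then show False using contra \<open>r < a\<close> \<open>s < b\<close> by blast
qed

text \<open>Continuity into [0,\<infinity>] carrying the upper topology.\<close>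

definition lower_semicontinuous_map :: "'a topology \<Rightarrow> ('a \<Rightarrow> ennreal) \<Rightarrow> bool" where
  "lower_semicontinuous_map W \<phi> \<longleftrightarrow> (\<forall>t. openin W {w \<in> topspace W. t < \<phi> w})"

lemma lower_semicontinuous_map_add:
  assumes \<phi>: "lower_semicontinuous_map W \<phi>" and \<psi>: "lower_semicontinuous_map W \<psi>"
  shows "lower_semicontinuous_map W (\<lambda>w. \<phi> w + \<psi> w)"
  unfolding lower_semicontinuous_map_def
proof (intro allI iffD2[OF openin_subopen] ballI)
  fix t w assume w: "w \<in> {w \<in> topspace W. t < \<phi> w + \<psi> w}"
  let ?U = "\<lambda>r \<phi>. {w \<in> topspace W. r < \<phi> w}"
  have open_U: "openin W (?U r \<phi>)" "openin W (?U r \<psi>)" for r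
    using \<phi> \<psi> by (simp_all add: lower_semicontinuous_map_def)
  from w consider "t < \<phi> w" | "t < \<psi> w" | r s where "r < \<phi> w" "s < \<psi> w" "t < r + s"
    using ennreal_less_add_cases by blast
  then show "\<exists>T. openin W T \<and> w \<in> T \<and> T \<subseteq> {w \<in> topspace W. t < \<phi> w + \<psi> w}"
  proof cases
    case 1
    with w open_U show ?thesis by (intro exI[of _ "?U t \<phi>"]) (auto intro: less_le_trans add_increasing2)
  next
    case 2
    with w open_U show ?thesis by (intro exI[of _ "?U t \<psi>"]) (auto intro: less_le_trans add_increasing)
  next
    case 3
    with w open_U show ?thesis
      by (intro exI[of _ "?U r \<phi> \<inter> ?U s \<psi>"]) (auto intro: less_le_trans[OF _ add_mono] less_imp_le)
  qed
qed

lemma lower_semicontinuous_map_compose: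
  assumes "continuous_map W Y h" "lower_semicontinuous_map Y \<phi>"
  shows "lower_semicontinuous_map W (\<lambda>w. \<phi> (h w))"
proof -
  have "{w \<in> topspace W. t < \<phi> (h w)} = {w \<in> topspace W. h w \<in> {y \<in> topspace Y. t < \<phi> y}}" for t
    using continuous_map_image_subset_topspace[OF assms(1)] by auto
  then show ?thesis
    using assms openin_continuous_map_preimage by (fastforce simp: lower_semicontinuous_map_def)
qed

lemma lower_semicontinuous_map_iff_closedin_sublevel:
  "lower_semicontinuous_map W \<phi> \<longleftrightarrow> (\<forall>t. closedin W {w \<in> topspace W. \<phi> w \<le> t})"
proof -
  have "topspace W - {w \<in> topspace W. \<phi> w \<le> t} = {w \<in> topspace W. t < \<phi> w}" for t
    by auto
  then show ?thesis by (simp add: closedin_def lower_semicontinuous_map_def)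
qed

lemma lower_semicontinuous_map_attains_INF:
  assumes "compact_space W" "topspace W \<noteq> {}" "lower_semicontinuous_map W \<phi>"
  obtains w where "w \<in> topspace W" "\<phi> w = (INF w\<in>topspace W. \<phi> w)"
proof -
  let ?m = "INF w\<in>topspace W. \<phi> w"
  let ?U = "\<lambda>t. {w \<in> topspace W. t < \<phi> w}"
  have "\<exists>w\<in>topspace W. \<phi> w \<le> ?m"
  proof (rule ccontr)
    assume contra: "\<not> ?thesis"
    have "topspace W \<subseteq> \<Union>(?U ` {t. ?m < t})"
    proof
      fix w assume w: "w \<in> topspace W"
      with contra have "?m < \<phi> w" by (simp add: not_le)
      then obtain t where "?m < t" "t < \<phi> w" using dense by blast
      with w show "w \<in> \<Union>(?U ` {t. ?m < t})" by blast
    qed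
    moreover have "\<forall>U\<in>?U ` {t. ?m < t}. openin W U"
      using assms(3) by (simp add: lower_semicontinuous_map_def)
    ultimately obtain \<F> where \<F>: "finite \<F>" "\<F> \<subseteq> ?U ` {t. ?m < t}" "topspace W \<subseteq> \<Union>\<F>"
      using compact_space_alt[THEN iffD1, OF assms(1), rule_format, of "?U ` {t. ?m < t}"] by auto
    obtain F where F: "finite F" "F \<subseteq> {t. ?m < t}" "topspace W \<subseteq> \<Union>(?U ` F)"
      using finite_subset_image[OF \<F>(1,2)] \<F>(3) by auto
    then have "F \<noteq> {}" using assms(2) by auto
    have "Min F \<le> \<phi> w" if w: "w \<in> topspace W" for w
    proof -
      obtain t where "t \<in> F" "t < \<phi> w" using F(3) w by blast
      then show ?thesis using F(1) by (meson Min_le less_imp_le order.trans)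
    qed
    then have "Min F \<le> ?m" by (rule INF_greatest)
    moreover have "?m < Min F" using F \<open>F \<noteq> {}\<close> by auto
    ultimately show False by simp
  qed
  then obtain w where "w \<in> topspace W" "\<phi> w \<le> ?m" by blast
  moreover from this have "?m \<le> \<phi> w" by (simp add: INF_lower)
  ultimately show ?thesis using that antisym by blast
qed

lemma lower_semicontinuous_map_INF:
  assumes X: "compact_space X" and \<phi>: "lower_semicontinuous_map (prod_topology A X) \<phi>"
  shows "lower_semicontinuous_map A (\<lambda>a. INF x\<in>topspace X. \<phi> (a, x))"
  unfolding lower_semicontinuous_map_def
proof
  fix t
  show "openin A {a \<in> topspace A. t < (INF x\<in>topspace X. \<phi> (a, x))}"
  proof (cases "t = top")
    case False
    let ?K = "{p \<in> topspace (prod_topology A X). \<phi> p \<le> t}"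
    \<comment> \<open>the sublevel set is the projection of a closed set along the compact factor\<close>
    have "{a \<in> topspace A. (INF x\<in>topspace X. \<phi> (a, x)) \<le> t} = fst ` ?K"
    proof (intro subset_antisym subsetI)
      fix a assume a: "a \<in> {a \<in> topspace A. (INF x\<in>topspace X. \<phi> (a, x)) \<le> t}"
      then have "topspace X \<noteq> {}" using False by (auto simp: top_unique)
      moreover have "continuous_map X (prod_topology A X) (\<lambda>x. (a, x))"
        using a by (auto intro: continuous_intros)
      ultimately obtain x where "x \<in> topspace X" "\<phi> (a, x) = (INF x\<in>topspace X. \<phi> (a, x))"
        using lower_semicontinuous_map_attains_INF[OF X _ lower_semicontinuous_map_compose[OF _ \<phi>]]
        by blast
      with a show "a \<in> fst ` ?K" by (auto intro!: image_eqI[of _ _ "(a, x)"])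
    qed (auto intro: INF_lower2)
    moreover have "closedin A (fst ` ?K)"
      using closed_map_fst[OF X] \<phi>[unfolded lower_semicontinuous_map_iff_closedin_sublevel]
      by (auto simp: closed_map_def)
    ultimately have "closedin A {a \<in> topspace A. (INF x\<in>topspace X. \<phi> (a, x)) \<le> t}" by simp
    moreover have "{a \<in> topspace A. t < (INF x\<in>topspace X. \<phi> (a, x))}
        = topspace A - {a \<in> topspace A. (INF x\<in>topspace X. \<phi> (a, x)) \<le> t}" by auto
    ultimately show ?thesis by (simp add: openin_diff)
  qed simp
qed

section \<open>Gluing two spaces along maps into a common set\<close>

definition glue_topology :: "'a topology \<Rightarrow> ('a \<Rightarrow> 'c) \<Rightarrow> 'b topology \<Rightarrow> ('b \<Rightarrow> 'c) \<Rightarrow> 'c topology"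
  where "glue_topology A p B q = topology (\<lambda>U. U \<subseteq> p ` topspace A \<union> q ` topspace B \<and>
     openin A {a \<in> topspace A. p a \<in> U} \<and> openin B {b \<in> topspace B. q b \<in> U})"

lemma openin_glue_topology:
  "openin (glue_topology A p B q) U \<longleftrightarrow> U \<subseteq> p ` topspace A \<union> q ` topspace B \<and>
     openin A {a \<in> topspace A. p a \<in> U} \<and> openin B {b \<in> topspace B. q b \<in> U}"
proof -
  have Int: "{x \<in> topspace X. f x \<in> S \<inter> T} = {x \<in> topspace X. f x \<in> S} \<inter> {x \<in> topspace X. f x \<in> T}"
    for X :: "'x topology" and f :: "'x \<Rightarrow> 'y" and S T
    by auto
  have Union: "{x \<in> topspace X. f x \<in> \<Union>K} = (\<Union>U\<in>K. {x \<in> topspace X. f x \<in> U})"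
    for X :: "'x topology" and f :: "'x \<Rightarrow> 'y" and K
    by auto
  have "istopology (\<lambda>U. U \<subseteq> p ` topspace A \<union> q ` topspace B \<and>
     openin A {a \<in> topspace A. p a \<in> U} \<and> openin B {b \<in> topspace B. q b \<in> U})"
    unfolding istopology_def Int Union by (auto intro!: openin_Union)
  then show ?thesis by (simp add: glue_topology_def)
qed

lemma topspace_glue_topology [simp]:
  "topspace (glue_topology A p B q) = p ` topspace A \<union> q ` topspace B"
proof (rule subset_antisym)
  show "topspace (glue_topology A p B q) \<subseteq> p ` topspace A \<union> q ` topspace B"
    using openin_topspace[of "glue_topology A p B q"] unfolding openin_glue_topology by (rule conjunct1)
  have "{a \<in> topspace A. p a \<in> p ` topspace A \<union> q ` topspace B} = topspace A"
    "{b \<in> topspace B. q b \<in> p ` topspace A \<union> q ` topspace B} = topspace B"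
    by auto
  then have "openin (glue_topology A p B q) (p ` topspace A \<union> q ` topspace B)"
    unfolding openin_glue_topology by simp
  then show "p ` topspace A \<union> q ` topspace B \<subseteq> topspace (glue_topology A p B q)"
    by (rule openin_subset)
qed

lemma closedin_glue_topology:
  "closedin (glue_topology A p B q) C \<longleftrightarrow> C \<subseteq> p ` topspace A \<union> q ` topspace B \<and>
     closedin A {a \<in> topspace A. p a \<in> C} \<and> closedin B {b \<in> topspace B. q b \<in> C}"
proof -
  let ?S = "p ` topspace A \<union> q ` topspace B"
  have "{a \<in> topspace A. p a \<in> ?S - C} = topspace A - {a \<in> topspace A. p a \<in> C}"
    "{b \<in> topspace B. q b \<in> ?S - C} = topspace B - {b \<in> topspace B. q b \<in> C}"
    by auto
  then show ?thesis
    by (auto simp: closedin_def openin_glue_topology)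
qed

lemma continuous_map_glue_topology:
  "continuous_map A (glue_topology A p B q) p" "continuous_map B (glue_topology A p B q) q"
  by (auto simp: continuous_map_def openin_glue_topology)

lemma compact_space_glue_topology:
  assumes "compact_space A" "compact_space B"
  shows "compact_space (glue_topology A p B q)"
proof -
  have "compactin (glue_topology A p B q) (p ` topspace A)"
    using assms(1) continuous_map_glue_topology(1) unfolding compact_space_def by (rule image_compactin)
  moreover have "compactin (glue_topology A p B q) (q ` topspace B)"
    using assms(2) continuous_map_glue_topology(2) unfolding compact_space_def by (rule image_compactin)
  ultimately show ?thesis by (simp add: compact_space_def compactin_Un)
qed

lemma t1_space_glue_topology:
  assumes A: "t1_space A" and B: "t1_space B"
    and p: "closed_map A (glue_topology A p B q) p" and q: "closed_map B (glue_topology A p B q) q"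
  shows "t1_space (glue_topology A p B q)"
  unfolding t1_space_closedin_singleton
proof
  fix z assume "z \<in> topspace (glue_topology A p B q)"
  then consider a where "a \<in> topspace A" "z = p a" | b where "b \<in> topspace B" "z = q b"
    by auto
  then show "closedin (glue_topology A p B q) {z}"
  proof cases
    case 1
    then have "closedin (glue_topology A p B q) (p ` {a})"
      using p closedin_t1_singleton[OF A] unfolding closed_map_def by blast
    with 1 show ?thesis by simp
  next
    case 2
    then have "closedin (glue_topology A p B q) (q ` {b})"
      using q closedin_t1_singleton[OF B] unfolding closed_map_def by blast
    with 2 show ?thesis by simp
  qed
qed

lemma compactin_fibre:
  assumes "compact_space A" "continuous_map A Y f" "t1_space Y"
  shows "compactin A {a \<in> topspace A. f a = y}"
proof (cases "y \<in> topspace Y")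
  case True
  then have "closedin A {a \<in> topspace A. f a \<in> {y}}"
    using assms(2,3) by (intro closedin_continuous_map_preimage closedin_t1_singleton)
  then show ?thesis using assms(1) by (simp add: closedin_compact_space)
next
  case False
  then have "{a \<in> topspace A. f a = y} = {}"
    using continuous_map_image_subset_topspace[OF assms(2)] by blast
  then show ?thesis by (simp only: compactin_empty)
qed

lemma Hausdorff_space_glue_topology:
  assumes A: "compact_space A" "Hausdorff_space A" and B: "compact_space B" "Hausdorff_space B"
    and p: "closed_map A (glue_topology A p B q) p" and q: "closed_map B (glue_topology A p B q) q"
  shows "Hausdorff_space (glue_topology A p B q)"
proof -
  let ?G = "glue_topology A p B q"
  have t1: "t1_space ?G"
    by (rule t1_space_glue_topology[OF Hausdorff_imp_t1_space[OF A(2)] Hausdorff_imp_t1_space[OF B(2)] p q])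
  have fibre_compact: "compactin A {a \<in> topspace A. p a = z}" "compactin B {b \<in> topspace B. q b = z}" for z
    by (rule compactin_fibre[OF A(1) continuous_map_glue_topology(1) t1],
        rule compactin_fibre[OF B(1) continuous_map_glue_topology(2) t1])
  show ?thesis
    unfolding Hausdorff_space_def
  proof (intro allI impI, elim conjE)
    fix z z' assume z: "z \<in> topspace ?G" and z': "z' \<in> topspace ?G" and "z \<noteq> z'"
    then have "disjnt {a \<in> topspace A. p a = z} {a \<in> topspace A. p a = z'}"
      "disjnt {b \<in> topspace B. q b = z} {b \<in> topspace B. q b = z'}"
      by (auto simp: disjnt_def)
    obtain U0 V0 where U0: "openin A U0" "openin A V0" "{a \<in> topspace A. p a = z} \<subseteq> U0"
        "{a \<in> topspace A. p a = z'} \<subseteq> V0" "disjnt U0 V0"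
      by (rule Hausdorff_space_compact_separation[OF A(2) fibre_compact(1)[of z] fibre_compact(1)[of z']
            \<open>disjnt {a \<in> topspace A. p a = z} _\<close>])
    obtain U1 V1 where U1: "openin B U1" "openin B V1" "{b \<in> topspace B. q b = z} \<subseteq> U1"
        "{b \<in> topspace B. q b = z'} \<subseteq> V1" "disjnt U1 V1"
      by (rule Hausdorff_space_compact_separation[OF B(2) fibre_compact(2)[of z] fibre_compact(2)[of z']
            \<open>disjnt {b \<in> topspace B. q b = z} _\<close>])
    define W where "W U V = topspace ?G - (p ` (topspace A - U) \<union> q ` (topspace B - V))" for U V
    have open_W: "openin ?G (W U V)" if "openin A U" "openin B V" for U V
    proof -
      have "closedin ?G (p ` (topspace A - U))" "closedin ?G (q ` (topspace B - V))"
        using p q that by (simp_all add: closed_map_def closedin_diff)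
      then show ?thesis unfolding W_def by (intro openin_diff openin_topspace closedin_Un)
    qed
    moreover have "z \<in> W U0 U1" "z' \<in> W V0 V1"
      using z z' U0(3,4) U1(3,4) unfolding W_def by blast+
    moreover have "disjnt (W U0 U1) (W V0 V1)"
      using U0(5) U1(5) unfolding W_def disjnt_iff topspace_glue_topology by blast
    ultimately show "\<exists>U V. openin ?G U \<and> openin ?G V \<and> z \<in> U \<and> z' \<in> V \<and> disjnt U V"
      using open_W[OF U0(1) U1(1)] open_W[OF U0(2) U1(2)] by blast
  qed
qed

section \<open>Gluing two metric compact Hausdorff spaces along embeddings\<close>

lemma metCH_sep_lower_semicontinuous:
  "metCH_sep Y d \<Longrightarrow> lower_semicontinuous_map (prod_topology Y Y) (\<lambda>p. d (fst p) (snd p))"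
  by (simp add: metCH_sep_def lower_semicontinuous_map_def topspace_prod_topology)

lemma metCH_sep_triangle:
  "metCH_sep Y d \<Longrightarrow> x \<in> topspace Y \<Longrightarrow> y \<in> topspace Y \<Longrightarrow> z \<in> topspace Y \<Longrightarrow> d x z \<le> d x y + d y z"
  by (simp add: metCH_sep_def)

lemma metCH_mor_in: "metCH_mor T d T' d' f \<Longrightarrow> x \<in> topspace T \<Longrightarrow> f x \<in> topspace T'"
  unfolding metCH_mor_def using continuous_map_image_subset_topspace by blast

lemma metCH_mor_dist_le:
  "metCH_mor T d T' d' f \<Longrightarrow> x \<in> topspace T \<Longrightarrow> y \<in> topspace T \<Longrightarrow> d' (f x) (f y) \<le> d x y"
  by (simp add: metCH_mor_def)

lemma compactin_map_prod_image:
  assumes "compact_space A" "compact_space B" "closedin (prod_topology A B) K"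
    and "continuous_map A Z p" "continuous_map B Z' q"
  shows "compactin (prod_topology Z Z') (map_prod p q ` K)"
proof (rule image_compactin)
  show "compactin (prod_topology A B) K"
    using assms(1-3) by (simp add: closedin_compact_space compact_space_prod_topology)
  show "continuous_map (prod_topology A B) (prod_topology Z Z') (map_prod p q)"
    using assms(4,5) by (simp add: map_prod_def continuous_map_prod_top)
qed

locale metCH_span =
  fixes X :: "'x topology" and dX :: "'x \<Rightarrow> 'x \<Rightarrow> ennreal"
    and Y0 :: "'a topology" and d0 :: "'a \<Rightarrow> 'a \<Rightarrow> ennreal"
    and Y1 :: "'b topology" and d1 :: "'b \<Rightarrow> 'b \<Rightarrow> ennreal"
    and f0 :: "'x \<Rightarrow> 'a" and f1 :: "'x \<Rightarrow> 'b"
  assumes X: "metCH_sep X dX" and Y0: "metCH_sep Y0 d0" and Y1: "metCH_sep Y1 d1"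
    and f0: "metCH_emb X dX Y0 d0 f0" and f1: "metCH_emb X dX Y1 d1 f1"
begin

lemma f0_mor: "metCH_mor X dX Y0 d0 f0" and f1_mor: "metCH_mor X dX Y1 d1 f1"
  using f0 f1 by (simp_all add: metCH_emb_def)

lemma f0_continuous: "continuous_map X Y0 f0" and f1_continuous: "continuous_map X Y1 f1"
  using f0_mor f1_mor by (simp_all add: metCH_mor_def)

lemma f0_in: "x \<in> topspace X \<Longrightarrow> f0 x \<in> topspace Y0"
  by (rule metCH_mor_in[OF f0_mor])

lemma f1_in: "x \<in> topspace X \<Longrightarrow> f1 x \<in> topspace Y1"
  by (rule metCH_mor_in[OF f1_mor])

lemma f0_inj: "inj_on f0 (topspace X)" and f1_inj: "inj_on f1 (topspace X)"
  using f0 f1 by (simp_all add: metCH_emb_def)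

lemma X_compact: "compact_space X" and Y0_compact: "compact_space Y0"
  and Y1_compact: "compact_space Y1"
  using X Y0 Y1 by (simp_all add: metCH_sep_def)

lemma Y0_Hausdorff: "Hausdorff_space Y0" and Y1_Hausdorff: "Hausdorff_space Y1"
  using Y0 Y1 by (simp_all add: metCH_sep_def)

lemma f0_dist: "x \<in> topspace X \<Longrightarrow> y \<in> topspace X \<Longrightarrow> d0 (f0 x) (f0 y) = dX x y"
  and f1_dist: "x \<in> topspace X \<Longrightarrow> y \<in> topspace X \<Longrightarrow> d1 (f1 x) (f1 y) = dX x y"
  using f0 f1 by (simp_all add: metCH_emb_def)

lemma d0_self: "a \<in> topspace Y0 \<Longrightarrow> d0 a a = 0"
  and d1_self: "b \<in> topspace Y1 \<Longrightarrow> d1 b b = 0"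
  using Y0 Y1 by (simp_all add: metCH_sep_def)

lemma d0_triangle: "a \<in> topspace Y0 \<Longrightarrow> b \<in> topspace Y0 \<Longrightarrow> c \<in> topspace Y0 \<Longrightarrow> d0 a c \<le> d0 a b + d0 b c"
  using Y0 by (rule metCH_sep_triangle)

lemma d1_triangle: "a \<in> topspace Y1 \<Longrightarrow> b \<in> topspace Y1 \<Longrightarrow> c \<in> topspace Y1 \<Longrightarrow> d1 a c \<le> d1 a b + d1 b c"
  using Y1 by (rule metCH_sep_triangle)

lemma d0_antisym: "a \<in> topspace Y0 \<Longrightarrow> b \<in> topspace Y0 \<Longrightarrow> d0 a b = 0 \<Longrightarrow> d0 b a = 0 \<Longrightarrow> a = b"
  using Y0 by (simp add: metCH_sep_def)

lemma d1_antisym: "a \<in> topspace Y1 \<Longrightarrow> b \<in> topspace Y1 \<Longrightarrow> d1 a b = 0 \<Longrightarrow> d1 b a = 0 \<Longrightarrow> a = b"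
  using Y1 by (simp add: metCH_sep_def)

definition cross_dist :: "'a \<Rightarrow> 'b \<Rightarrow> ennreal" where
  "cross_dist a b = (INF x\<in>topspace X. d0 a (f0 x) + d1 (f1 x) b)"

lemma cross_dist_f1:
  assumes "a \<in> topspace Y0" "x \<in> topspace X"
  shows "cross_dist a (f1 x) = d0 a (f0 x)"
proof (rule antisym)
  show "cross_dist a (f1 x) \<le> d0 a (f0 x)"
    unfolding cross_dist_def using assms by (intro INF_lower2[of x]) (simp_all add: d1_self f1_in)
  have "d0 a (f0 x) \<le> d0 a (f0 y) + d1 (f1 y) (f1 x)" if "y \<in> topspace X" for y
    using assms that d0_triangle[of a "f0 y" "f0 x"] by (simp add: f0_in f0_dist f1_dist)
  then show "d0 a (f0 x) \<le> cross_dist a (f1 x)"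
    unfolding cross_dist_def by (rule INF_greatest)
qed

lemma cross_dist_f0:
  assumes "b \<in> topspace Y1" "x \<in> topspace X"
  shows "cross_dist (f0 x) b = d1 (f1 x) b"
proof (rule antisym)
  show "cross_dist (f0 x) b \<le> d1 (f1 x) b"
    unfolding cross_dist_def using assms by (intro INF_lower2[of x]) (simp_all add: d0_self f0_in)
  have "d1 (f1 x) b \<le> d0 (f0 x) (f0 y) + d1 (f1 y) b" if "y \<in> topspace X" for y
    using assms that d1_triangle[of "f1 x" "f1 y" b] by (simp add: f1_in f0_dist f1_dist)
  then show "d1 (f1 x) b \<le> cross_dist (f0 x) b"
    unfolding cross_dist_def by (rule INF_greatest)
qed

lemma cross_dist_triangle_left:
  assumes "a \<in> topspace Y0" "b \<in> topspace Y0" "c \<in> topspace Y1"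
  shows "cross_dist a c \<le> d0 a b + cross_dist b c"
proof -
  have "d0 a (f0 x) + d1 (f1 x) c \<le> d0 a b + (d0 b (f0 x) + d1 (f1 x) c)" if "x \<in> topspace X" for x
    using assms that d0_triangle[of a b "f0 x"] by (simp add: f0_in add.assoc[symmetric] add_right_mono)
  then show ?thesis
    unfolding cross_dist_def ennreal_add_INF by (blast intro: INF_mono)
qed

lemma cross_dist_triangle_right:
  assumes "a \<in> topspace Y0" "b \<in> topspace Y1" "c \<in> topspace Y1"
  shows "cross_dist a c \<le> cross_dist a b + d1 b c"
proof -
  have "d0 a (f0 x) + d1 (f1 x) c \<le> d0 a (f0 x) + d1 (f1 x) b + d1 b c" if "x \<in> topspace X" for x
    using assms that d1_triangle[of "f1 x" b c] by (simp add: f1_in add.assoc add_left_mono)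
  then show ?thesis
    unfolding cross_dist_def ennreal_INF_add by (blast intro: INF_mono)
qed

lemma detour_lower_semicontinuous:
  "lower_semicontinuous_map (prod_topology (prod_topology Y0 Y1) X)
     (\<lambda>q. d0 (fst (fst q)) (f0 (snd q)) + d1 (f1 (snd q)) (snd (fst q)))"
proof (rule lower_semicontinuous_map_add)
  have "continuous_map (prod_topology (prod_topology Y0 Y1) X) (prod_topology Y0 Y0)
      (\<lambda>q. (fst (fst q), f0 (snd q)))"
    by (intro continuous_map_pairedI continuous_map_compose[OF continuous_map_fst continuous_map_fst, unfolded o_def]
        continuous_map_compose[OF continuous_map_snd f0_continuous, unfolded o_def])
  from lower_semicontinuous_map_compose[OF this metCH_sep_lower_semicontinuous[OF Y0]]
  show "lower_semicontinuous_map (prod_topology (prod_topology Y0 Y1) X) (\<lambda>q. d0 (fst (fst q)) (f0 (snd q)))"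
    by simp
  have "continuous_map (prod_topology (prod_topology Y0 Y1) X) (prod_topology Y1 Y1)
      (\<lambda>q. (f1 (snd q), snd (fst q)))"
    by (intro continuous_map_pairedI continuous_map_compose[OF continuous_map_fst continuous_map_snd, unfolded o_def]
        continuous_map_compose[OF continuous_map_snd f1_continuous, unfolded o_def])
  from lower_semicontinuous_map_compose[OF this metCH_sep_lower_semicontinuous[OF Y1]]
  show "lower_semicontinuous_map (prod_topology (prod_topology Y0 Y1) X) (\<lambda>q. d1 (f1 (snd q)) (snd (fst q)))"
    by simp
qed

lemma cross_dist_lower_semicontinuous:
  "lower_semicontinuous_map (prod_topology Y0 Y1) (\<lambda>p. cross_dist (fst p) (snd p))"
  using lower_semicontinuous_map_INF[OF X_compact detour_lower_semicontinuous]
  by (simp add: cross_dist_def)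

lemma cross_dist_eq_0E:
  assumes "a \<in> topspace Y0" "b \<in> topspace Y1" "cross_dist a b = 0"
  obtains x where "x \<in> topspace X" "d0 a (f0 x) = 0" "d1 (f1 x) b = 0"
proof -
  have ne: "topspace X \<noteq> {}" using assms(3) by (auto simp: cross_dist_def)
  have "continuous_map X (prod_topology (prod_topology Y0 Y1) X) (\<lambda>x. ((a, b), x))"
    using assms(1,2) by (intro continuous_map_pairedI) (simp_all add: continuous_map_id[unfolded id_def])
  from lower_semicontinuous_map_compose[OF this detour_lower_semicontinuous]
  have "lower_semicontinuous_map X (\<lambda>x. d0 a (f0 x) + d1 (f1 x) b)" by simp
  then obtain x where "x \<in> topspace X" "d0 a (f0 x) + d1 (f1 x) b = cross_dist a b"
    unfolding cross_dist_def by (rule lower_semicontinuous_map_attains_INF[OF X_compact ne])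
  with assms(3) show thesis using that by simp
qed

lemma closedin_image_f1_preimage_f0:
  assumes "closedin Y0 C"
  shows "closedin Y1 (f1 ` {x \<in> topspace X. f0 x \<in> C})"
proof -
  have "compactin X {x \<in> topspace X. f0 x \<in> C}"
    using closedin_continuous_map_preimage[OF f0_continuous assms] by (rule closedin_compact_space[OF X_compact])
  then have "compactin Y1 (f1 ` {x \<in> topspace X. f0 x \<in> C})"
    using f1_continuous by (rule image_compactin)
  then show ?thesis by (simp add: compactin_imp_closedin Y1_Hausdorff)
qed

text \<open>The second summand is the cross distance from \<open>Y\<^sub>1\<close> back to \<open>Y\<^sub>0\<close>.\<close>

lemma d0_le_cross_dist_add:
  assumes "a \<in> topspace Y0" "b \<in> topspace Y1" "c \<in> topspace Y0"
  shows "d0 a c \<le> cross_dist a b + (INF x\<in>topspace X. d1 b (f1 x) + d0 (f0 x) c)"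
proof -
  have "d0 a c \<le> (d0 a (f0 x) + d1 (f1 x) b) + (d1 b (f1 y) + d0 (f0 y) c)"
    if x: "x \<in> topspace X" and y: "y \<in> topspace X" for x y
  proof -
    have "d0 a c \<le> d0 a (f0 x) + d0 (f0 x) (f0 y) + d0 (f0 y) c"
      using assms x y d0_triangle[of a "f0 x" c] d0_triangle[of "f0 x" "f0 y" c]
      by (simp add: f0_in add.assoc) (meson add_left_mono order.trans)
    also have "d0 (f0 x) (f0 y) \<le> d1 (f1 x) b + d1 b (f1 y)"
      using assms x y d1_triangle[of "f1 x" b "f1 y"] by (simp add: f0_dist f1_dist f1_in)
    finally show ?thesis by (simp add: add_right_mono add_left_mono add.assoc)
  qed
  then show ?thesis
    unfolding cross_dist_def ennreal_INF_add ennreal_add_INF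
    by (blast intro: INF_greatest)
qed

lemma cocone_dist_le_cross_dist:
  assumes P: "metCH_sep P dP" and l0: "metCH_mor Y0 d0 P dP l0" and l1: "metCH_mor Y1 d1 P dP l1"
    and compat: "\<forall>x\<in>topspace X. l0 (f0 x) = l1 (f1 x)"
    and a: "a \<in> topspace Y0" and b: "b \<in> topspace Y1"
  shows "dP (l0 a) (l1 b) \<le> cross_dist a b"
  unfolding cross_dist_def
proof (rule INF_greatest)
  fix x assume x: "x \<in> topspace X"
  have "dP (l0 a) (l1 b) \<le> dP (l0 a) (l0 (f0 x)) + dP (l1 (f1 x)) (l1 b)"
    using metCH_sep_triangle[OF P, of "l0 a" "l0 (f0 x)" "l1 b"] compat x a b
    by (simp add: metCH_mor_in[OF l0] metCH_mor_in[OF l1] f0_in f1_in)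
  also have "\<dots> \<le> d0 a (f0 x) + d1 (f1 x) b"
    using a b x by (intro add_mono metCH_mor_dist_le[OF l0] metCH_mor_dist_le[OF l1]) (simp_all add: f0_in f1_in)
  finally show "dP (l0 a) (l1 b) \<le> d0 a (f0 x) + d1 (f1 x) b" .
qed

end

locale metCH_gluing = metCH_span X dX Y0 d0 Y1 d1 f0 f1 + swap: metCH_span X dX Y1 d1 Y0 d0 f1 f0
  for X :: "'x topology" and dX :: "'x \<Rightarrow> 'x \<Rightarrow> ennreal"
    and Y0 :: "'a topology" and d0 :: "'a \<Rightarrow> 'a \<Rightarrow> ennreal"
    and Y1 :: "'b topology" and d1 :: "'b \<Rightarrow> 'b \<Rightarrow> ennreal"
    and f0 :: "'x \<Rightarrow> 'a" and f1 :: "'x \<Rightarrow> 'b"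
begin

lemma cross_dists_eq_0_imp_common_preimage:
  assumes a: "a \<in> topspace Y0" and b: "b \<in> topspace Y1"
    and "cross_dist a b = 0" "swap.cross_dist b a = 0"
  shows "\<exists>x\<in>topspace X. a = f0 x \<and> b = f1 x"
proof -
  obtain x where x: "x \<in> topspace X" "d0 a (f0 x) = 0" "d1 (f1 x) b = 0"
    using cross_dist_eq_0E assms by blast
  obtain x' where x': "x' \<in> topspace X" "d1 b (f1 x') = 0" "d0 (f0 x') a = 0"
    using swap.cross_dist_eq_0E assms by blast
  have "d1 (f1 x) (f1 x') \<le> d1 (f1 x) b + d1 b (f1 x')"
    by (rule d1_triangle) (simp_all add: b f1_in x(1) x'(1))
  then have xx': "d0 (f0 x) (f0 x') = 0" using x x' by (simp add: f0_dist f1_dist)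
  have "d0 (f0 x') (f0 x) \<le> d0 (f0 x') a + d0 a (f0 x)"
    by (rule d0_triangle) (simp_all add: a f0_in x(1) x'(1))
  then have x'x: "d1 (f1 x') (f1 x) = 0" using x x' by (simp add: f0_dist f1_dist)
  have "d0 (f0 x) a \<le> d0 (f0 x) (f0 x') + d0 (f0 x') a"
    by (rule d0_triangle) (simp_all add: a f0_in x(1) x'(1))
  then have "a = f0 x" using a x x' xx' by (simp add: d0_antisym f0_in)
  have "d1 b (f1 x) \<le> d1 b (f1 x') + d1 (f1 x') (f1 x)"
    by (rule d1_triangle) (simp_all add: b f1_in x(1) x'(1))
  then have "b = f1 x" using b x x' x'x by (simp add: d1_antisym f1_in)
  with \<open>a = f0 x\<close> x(1) show ?thesis by blast
qed

text \<open>\<open>Inl ` Y\<^sub>0 \<union> glue1 ` Y\<^sub>1\<close> is the disjoint union with \<open>f\<^sub>1 x\<close> identified with \<open>f\<^sub>0 x\<close>.\<close>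

definition glue1 :: "'b \<Rightarrow> 'a + 'b" where
  "glue1 b = (if b \<in> f1 ` topspace X then Inl (f0 (the_inv_into (topspace X) f1 b)) else Inr b)"

lemma glue1_f1: "x \<in> topspace X \<Longrightarrow> glue1 (f1 x) = Inl (f0 x)"
  by (simp add: glue1_def the_inv_into_f_f f1_inj)

lemma glue1_not_f1: "b \<notin> f1 ` topspace X \<Longrightarrow> glue1 b = Inr b"
  by (simp add: glue1_def)

lemma glue1_eq_Inl_iff: "glue1 b = Inl a \<longleftrightarrow> (\<exists>x\<in>topspace X. a = f0 x \<and> b = f1 x)"
proof (cases "b \<in> f1 ` topspace X")
  case True
  then obtain x where "x \<in> topspace X" "b = f1 x" by blast
  then show ?thesis using f1_inj by (auto simp: glue1_f1 dest: inj_onD)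
qed (auto simp: glue1_not_f1)

lemma inj_glue1: "inj glue1"
proof (rule injI)
  fix b b' assume "glue1 b = glue1 b'"
  then show "b = b'"
    by (cases "b \<in> f1 ` topspace X"; cases "b' \<in> f1 ` topspace X")
      (auto simp: glue1_f1 glue1_not_f1 dest: inj_onD[OF f0_inj])
qed

definition glued_top :: "('a + 'b) topology" where
  "glued_top = glue_topology Y0 Inl Y1 glue1"

lemma topspace_glued_top: "topspace glued_top = Inl ` topspace Y0 \<union> glue1 ` topspace Y1"
  by (simp add: glued_top_def)

lemma glued_top_cases:
  assumes "w \<in> topspace glued_top"
  obtains a where "a \<in> topspace Y0" "w = Inl a" | b where "b \<in> topspace Y1" "w = glue1 b"
  using assms by (auto simp: topspace_glued_top)

lemma continuous_map_Inl_glued: "continuous_map Y0 glued_top Inl"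
  and continuous_map_glue1: "continuous_map Y1 glued_top glue1"
  by (simp_all add: glued_top_def continuous_map_glue_topology)

lemma closed_map_Inl_glued: "closed_map Y0 glued_top Inl"
  unfolding closed_map_def
proof (intro allI impI)
  fix C assume C: "closedin Y0 C"
  have eq1: "{b \<in> topspace Y1. glue1 b \<in> Inl ` C} = f1 ` {x \<in> topspace X. f0 x \<in> C}"
    by (auto simp: glue1_eq_Inl_iff glue1_f1 f1_in)
  have eq0: "{a \<in> topspace Y0. Inl a \<in> Inl ` C} = C"
    using closedin_subset[OF C] by auto
  show "closedin glued_top (Inl ` C)"
    unfolding glued_top_def closedin_glue_topology eq0 eq1
    using C closedin_subset[OF C] closedin_image_f1_preimage_f0[OF C] by auto
qed

lemma closed_map_glue1: "closed_map Y1 glued_top glue1"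
  unfolding closed_map_def
proof (intro allI impI)
  fix C assume C: "closedin Y1 C"
  have eq0: "{a \<in> topspace Y0. Inl a \<in> glue1 ` C} = f0 ` {x \<in> topspace X. f1 x \<in> C}"
  proof (intro subset_antisym subsetI)
    fix a assume "a \<in> {a \<in> topspace Y0. Inl a \<in> glue1 ` C}"
    then show "a \<in> f0 ` {x \<in> topspace X. f1 x \<in> C}"
      by (auto simp: eq_commute[of "Inl _"] glue1_eq_Inl_iff)
  next
    fix a assume "a \<in> f0 ` {x \<in> topspace X. f1 x \<in> C}"
    then obtain x where x: "x \<in> topspace X" "f1 x \<in> C" "a = f0 x" by blast
    then have "Inl a = glue1 (f1 x)" by (simp add: glue1_f1)
    with x show "a \<in> {a \<in> topspace Y0. Inl a \<in> glue1 ` C}" using f0_in by blast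
  qed
  have eq1: "{b \<in> topspace Y1. glue1 b \<in> glue1 ` C} = C"
    using closedin_subset[OF C] inj_glue1 by (auto simp: inj_image_mem_iff)
  show "closedin glued_top (glue1 ` C)"
    unfolding glued_top_def closedin_glue_topology eq0 eq1
    using C closedin_subset[OF C] swap.closedin_image_f1_preimage_f0[OF C] by auto
qed

lemma compact_space_glued_top: "compact_space glued_top"
  by (simp add: glued_top_def compact_space_glue_topology Y0_compact Y1_compact)

lemma Hausdorff_space_glued_top: "Hausdorff_space glued_top"
  using closed_map_Inl_glued closed_map_glue1 unfolding glued_top_def
  by (intro Hausdorff_space_glue_topology Y0_compact Y1_compact Y0_Hausdorff Y1_Hausdorff)

definition glued_dist :: "'a + 'b \<Rightarrow> 'a + 'b \<Rightarrow> ennreal" where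
  "glued_dist w w' = (case (w, w') of
       (Inl a, Inl a') \<Rightarrow> d0 a a'
     | (Inl a, Inr b') \<Rightarrow> cross_dist a b'
     | (Inr b, Inl a') \<Rightarrow> swap.cross_dist b a'
     | (Inr b, Inr b') \<Rightarrow> d1 b b')"

lemma glued_dist_Inl_Inl: "glued_dist (Inl a) (Inl a') = d0 a a'"
  by (simp add: glued_dist_def)

lemma glued_dist_Inl_glue1:
  "a \<in> topspace Y0 \<Longrightarrow> b \<in> topspace Y1 \<Longrightarrow> glued_dist (Inl a) (glue1 b) = cross_dist a b"
  by (cases "b \<in> f1 ` topspace X") (auto simp: glued_dist_def glue1_f1 glue1_not_f1 cross_dist_f1)

lemma glued_dist_glue1_Inl:
  "b \<in> topspace Y1 \<Longrightarrow> a \<in> topspace Y0 \<Longrightarrow> glued_dist (glue1 b) (Inl a) = swap.cross_dist b a"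
  by (cases "b \<in> f1 ` topspace X") (auto simp: glued_dist_def glue1_f1 glue1_not_f1 swap.cross_dist_f0)

lemma glued_dist_glue1_glue1:
  "b \<in> topspace Y1 \<Longrightarrow> b' \<in> topspace Y1 \<Longrightarrow> glued_dist (glue1 b) (glue1 b') = d1 b b'"
  by (cases "b \<in> f1 ` topspace X"; cases "b' \<in> f1 ` topspace X")
    (auto simp: glued_dist_def glue1_f1 glue1_not_f1 cross_dist_f0 swap.cross_dist_f1 f0_dist f1_dist)

lemmas glued_dist_simps =
  glued_dist_Inl_Inl glued_dist_Inl_glue1 glued_dist_glue1_Inl glued_dist_glue1_glue1

lemma glued_dist_self: "w \<in> topspace glued_top \<Longrightarrow> glued_dist w w = 0"
  by (elim glued_top_cases) (simp_all add: glued_dist_simps d0_self d1_self)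

lemma glued_dist_triangle:
  assumes "u \<in> topspace glued_top" "v \<in> topspace glued_top" "w \<in> topspace glued_top"
  shows "glued_dist u w \<le> glued_dist u v + glued_dist v w"
  using assms
  by (elim glued_top_cases)
    (simp_all add: glued_dist_simps d0_triangle d1_triangle cross_dist_triangle_left cross_dist_triangle_right
      swap.cross_dist_triangle_left swap.cross_dist_triangle_right
      d0_le_cross_dist_add[folded swap.cross_dist_def] swap.d0_le_cross_dist_add[folded cross_dist_def])

lemma glued_dist_antisym:
  assumes "v \<in> topspace glued_top" "w \<in> topspace glued_top" "glued_dist v w = 0" "glued_dist w v = 0"
  shows "v = w"
  using assms
proof (elim glued_top_cases)
  fix a b assume "a \<in> topspace Y0" "b \<in> topspace Y1" "v = Inl a" "w = glue1 b"
  with assms(3,4) obtain x where "x \<in> topspace X" "a = f0 x" "b = f1 x"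
    using cross_dists_eq_0_imp_common_preimage by (auto simp: glued_dist_simps)
  with \<open>v = Inl a\<close> \<open>w = glue1 b\<close> show "v = w" by (simp add: glue1_f1)
next
  fix a b assume "a \<in> topspace Y0" "b \<in> topspace Y1" "v = glue1 b" "w = Inl a"
  with assms(3,4) obtain x where "x \<in> topspace X" "a = f0 x" "b = f1 x"
    using cross_dists_eq_0_imp_common_preimage by (auto simp: glued_dist_simps)
  with \<open>w = Inl a\<close> \<open>v = glue1 b\<close> show "v = w" by (simp add: glue1_f1)
qed (auto simp: glued_dist_simps d0_antisym intro!: arg_cong[of _ _ glue1] d1_antisym)

lemma glued_dist_lower_semicontinuous:
  "lower_semicontinuous_map (prod_topology glued_top glued_top) (\<lambda>p. glued_dist (fst p) (snd p))"
  unfolding lower_semicontinuous_map_iff_closedin_sublevel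
proof
  fix t
  define K00 where "K00 = {p \<in> topspace (prod_topology Y0 Y0). d0 (fst p) (snd p) \<le> t}"
  define K01 where "K01 = {p \<in> topspace (prod_topology Y0 Y1). cross_dist (fst p) (snd p) \<le> t}"
  define K10 where "K10 = {p \<in> topspace (prod_topology Y1 Y0). swap.cross_dist (fst p) (snd p) \<le> t}"
  define K11 where "K11 = {p \<in> topspace (prod_topology Y1 Y1). d1 (fst p) (snd p) \<le> t}"
  have closed: "closedin (prod_topology Y0 Y0) K00" "closedin (prod_topology Y0 Y1) K01"
    "closedin (prod_topology Y1 Y0) K10" "closedin (prod_topology Y1 Y1) K11"
    using metCH_sep_lower_semicontinuous[OF Y0] cross_dist_lower_semicontinuous
      swap.cross_dist_lower_semicontinuous metCH_sep_lower_semicontinuous[OF Y1]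
    unfolding K00_def K01_def K10_def K11_def lower_semicontinuous_map_iff_closedin_sublevel
    by blast+
  let ?F = "map_prod Inl Inl ` K00 \<union> map_prod Inl glue1 ` K01
    \<union> map_prod glue1 Inl ` K10 \<union> map_prod glue1 glue1 ` K11"
  have "{p \<in> topspace (prod_topology glued_top glued_top). glued_dist (fst p) (snd p) \<le> t} = ?F"
  proof (intro subset_antisym subsetI)
    fix p assume p: "p \<in> {p \<in> topspace (prod_topology glued_top glued_top). glued_dist (fst p) (snd p) \<le> t}"
    then obtain v w where "p = (v, w)" "v \<in> topspace glued_top" "w \<in> topspace glued_top" by auto
    then show "p \<in> ?F" using p
      by (elim glued_top_cases) (simp_all add: K00_def K01_def K10_def K11_def glued_dist_simps map_prod_imageI)
  qed (auto simp: K00_def K01_def K10_def K11_def glued_dist_simps topspace_glued_top)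
  moreover have "compactin (prod_topology glued_top glued_top) ?F"
    using closed Y0_compact Y1_compact continuous_map_Inl_glued continuous_map_glue1
    by (intro compactin_Un compactin_map_prod_image) assumption+
  ultimately show "closedin (prod_topology glued_top glued_top)
      {p \<in> topspace (prod_topology glued_top glued_top). glued_dist (fst p) (snd p) \<le> t}"
    by (simp add: compactin_imp_closedin Hausdorff_space_prod_topology Hausdorff_space_glued_top)
qed

lemma metCH_sep_glued: "metCH_sep glued_top glued_dist"
  using compact_space_glued_top Hausdorff_space_glued_top glued_dist_self glued_dist_triangle
    glued_dist_antisym glued_dist_lower_semicontinuous
  by (simp add: metCH_sep_def lower_semicontinuous_map_def topspace_prod_topology)

lemma metCH_mor_Inl_glued: "metCH_mor Y0 d0 glued_top glued_dist Inl"
  using continuous_map_Inl_glued by (simp add: metCH_mor_def glued_dist_simps)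

lemma metCH_mor_glue1: "metCH_mor Y1 d1 glued_top glued_dist glue1"
  using continuous_map_glue1 by (simp add: metCH_mor_def glued_dist_simps)

lemma pushout_map_to_glued:
  assumes "metCH_pushout TYPE('a + 'b) X dX Y0 d0 Y1 d1 f0 f1 P dP l0 l1"
  obtains h where "metCH_mor P dP glued_top glued_dist h"
    "\<forall>a\<in>topspace Y0. h (l0 a) = Inl a" "\<forall>b\<in>topspace Y1. h (l1 b) = glue1 b"
proof -
  from assms have "\<exists>h. metCH_mor P dP glued_top glued_dist h \<and>
      (\<forall>a\<in>topspace Y0. h (l0 a) = Inl a) \<and> (\<forall>b\<in>topspace Y1. h (l1 b) = glue1 b)"
    unfolding metCH_pushout_def
    using metCH_sep_glued metCH_mor_Inl_glued metCH_mor_glue1 by (simp add: glue1_f1)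
  with that show thesis by blast
qed

end

theorem corollary4p3:
  fixes X :: "'x topology" and dX :: "'x \<Rightarrow> 'x \<Rightarrow> ennreal"
    and Y0 :: "'a topology" and d0 :: "'a \<Rightarrow> 'a \<Rightarrow> ennreal"
    and Y1 :: "'b topology" and d1 :: "'b \<Rightarrow> 'b \<Rightarrow> ennreal"
    and P :: "'p topology" and dP :: "'p \<Rightarrow> 'p \<Rightarrow> ennreal"
    and f0 :: "'x \<Rightarrow> 'a" and f1 :: "'x \<Rightarrow> 'b"
    and l0 :: "'a \<Rightarrow> 'p" and l1 :: "'b \<Rightarrow> 'p"
  assumes "metCH_sep X dX" and "metCH_sep Y0 d0" and "metCH_sep Y1 d1"
    and "metCH_emb X dX Y0 d0 f0" and "metCH_emb X dX Y1 d1 f1"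
    and "metCH_pushout TYPE('a + 'b) X dX Y0 d0 Y1 d1 f0 f1 P dP l0 l1"
  shows "(\<forall>u\<in>topspace Y0. \<forall>v\<in>topspace Y0. dP (l0 u) (l0 v) = d0 u v)
       \<and> (\<forall>u\<in>topspace Y1. \<forall>v\<in>topspace Y1. dP (l1 u) (l1 v) = d1 u v)
       \<and> (\<forall>u\<in>topspace Y0. \<forall>v\<in>topspace Y1.
            dP (l0 u) (l1 v) = (INF x\<in>topspace X. d0 u (f0 x) + d1 (f1 x) v))
       \<and> (\<forall>u\<in>topspace Y1. \<forall>v\<in>topspace Y0.
            dP (l1 u) (l0 v) = (INF x\<in>topspace X. d1 u (f1 x) + d0 (f0 x) v))"
proof -
  interpret metCH_gluing X dX Y0 d0 Y1 d1 f0 f1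
    by unfold_locales (fact assms)+
  have P: "metCH_sep P dP" and l0: "metCH_mor Y0 d0 P dP l0" and l1: "metCH_mor Y1 d1 P dP l1"
    and compat: "\<forall>x\<in>topspace X. l0 (f0 x) = l1 (f1 x)"
    using assms(6) by (simp_all add: metCH_pushout_def)
  obtain h where h: "metCH_mor P dP glued_top glued_dist h"
    and hl0: "\<forall>a\<in>topspace Y0. h (l0 a) = Inl a" and hl1: "\<forall>b\<in>topspace Y1. h (l1 b) = glue1 b"
    using pushout_map_to_glued[OF assms(6)] .
  \<comment> \<open>lower bounds: \<open>h\<close> is non-expansive\<close>
  have "\<forall>u\<in>topspace Y0. \<forall>v\<in>topspace Y0. d0 u v \<le> dP (l0 u) (l0 v)"
    "\<forall>u\<in>topspace Y1. \<forall>v\<in>topspace Y1. d1 u v \<le> dP (l1 u) (l1 v)"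
    "\<forall>u\<in>topspace Y0. \<forall>v\<in>topspace Y1. cross_dist u v \<le> dP (l0 u) (l1 v)"
    "\<forall>u\<in>topspace Y1. \<forall>v\<in>topspace Y0. swap.cross_dist u v \<le> dP (l1 u) (l0 v)"
    using metCH_mor_dist_le[OF h] metCH_mor_in[OF l0] metCH_mor_in[OF l1] hl0 hl1
    by (metis glued_dist_simps)+
  \<comment> \<open>upper bounds: \<open>l\<^sub>0\<close>, \<open>l\<^sub>1\<close> are non-expansive and agree on \<open>X\<close>\<close>
  moreover have "\<forall>u\<in>topspace Y0. \<forall>v\<in>topspace Y0. dP (l0 u) (l0 v) \<le> d0 u v"
    "\<forall>u\<in>topspace Y1. \<forall>v\<in>topspace Y1. dP (l1 u) (l1 v) \<le> d1 u v"
    "\<forall>u\<in>topspace Y0. \<forall>v\<in>topspace Y1. dP (l0 u) (l1 v) \<le> cross_dist u v"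
    "\<forall>u\<in>topspace Y1. \<forall>v\<in>topspace Y0. dP (l1 u) (l0 v) \<le> swap.cross_dist u v"
    using metCH_mor_dist_le[OF l0] metCH_mor_dist_le[OF l1] compat
      cocone_dist_le_cross_dist[OF P l0 l1] swap.cocone_dist_le_cross_dist[OF P l1 l0]
    by simp_all
  ultimately show ?thesis
    unfolding cross_dist_def swap.cross_dist_def by (blast intro: antisym)
qed

end
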